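(* Let $X$ be a geodesic $\delta$--hyperbolic space ($\delta\geqslant 0$), let $g$ be an isometry of $X$ and let $x,y\in X$. If $m_1$ is the midpoint of a geodesic segment $[x,gx]$ and $m_2$ is the midpoint of a geodesic segment $[y,gy]$, then every geodesic segment $[m_1,m_2]$ is contained in $C_g^{+70\delta}$.
   Context: Distances are written $|x-y|$; Gromov product $(p,q)_x:=\frac12(|p-x|+|q-x|-|p-q|)$; $X$ is $\delta$--hyperbolic if $(p,r)_x\geqslant \min\{(p,q)_x,(q,r)_x\}-\delta$ for all $p,q,r,x$. For an isometry $g$, its translation length is $[g]:=\inf_{x\in X}|gx-x|$ and $C_g:=\{x\in X\mid |gx-x|\leqslant [g]+8\delta\}$. For $A\subset X$ and $a\geqslant 0$, $A^{+a}:=\{x\in X\mid d(x,A)\leqslant a\}$. *)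

theory Defs
  imports "HOL-Analysis.Analysis"
begin

text \<open>The space X is the whole carrier of a metric space type 'a.\<close>

definition gromov_product :: "'a::metric_space \<Rightarrow> 'a \<Rightarrow> 'a \<Rightarrow> real" where
  "gromov_product p q x = (dist p x + dist q x - dist p q) / 2"

definition delta_hyperbolic :: "real \<Rightarrow> 'a::metric_space itself \<Rightarrow> bool" where
  "delta_hyperbolic \<delta> _ \<longleftrightarrow> (\<forall>p q r x::'a.
     gromov_product p r x \<ge> min (gromov_product p q x) (gromov_product q r x) - \<delta>)"

definition geodesic_path :: "(real \<Rightarrow> 'a::metric_space) \<Rightarrow> 'a \<Rightarrow> 'a \<Rightarrow> bool" where
  "geodesic_path \<gamma> x y \<longleftrightarrow> \<gamma> 0 = x \<and> \<gamma> (dist x y) = y \<and>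
     (\<forall>s\<in>{0..dist x y}. \<forall>t\<in>{0..dist x y}. dist (\<gamma> s) (\<gamma> t) = \<bar>s - t\<bar>)"

definition geodesic_space :: "'a::metric_space itself \<Rightarrow> bool" where
  "geodesic_space _ \<longleftrightarrow> (\<forall>x y::'a. \<exists>\<gamma>. geodesic_path \<gamma> x y)"

definition isometry :: "('a::metric_space \<Rightarrow> 'a) \<Rightarrow> bool" where
  "isometry g \<longleftrightarrow> bij g \<and> (\<forall>x y. dist (g x) (g y) = dist x y)"

definition translation_length :: "('a::metric_space \<Rightarrow> 'a) \<Rightarrow> real" where
  "translation_length g = Inf {dist (g x) x | x. True}"

definition min_set :: "real \<Rightarrow> ('a::metric_space \<Rightarrow> 'a) \<Rightarrow> 'a set" where
  "min_set \<delta> g = {x. dist (g x) x \<le> translation_length g + 8 * \<delta>}"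

text \<open>A^{+a}; d(x, empty) = infinity, so the neighbourhood of the empty set is empty.\<close>
definition nbhd :: "'a::metric_space set \<Rightarrow> real \<Rightarrow> 'a set" where
  "nbhd A a = {x. A \<noteq> {} \<and> infdist x A \<le> a}"

end

theory Submission
  imports Defs
begin

text \<open>
  Write D = |gp - p| and L = [g]. Hyperbolicity at gp for the points p, gw, g(gp), with w
  arbitrary, gives (p, g(gp))_gp \<ge> (D - |gw - w|)/2 - \<delta>, hence (p, g(gp))_gp \<ge> (D - L)/2 - \<delta>:
  the broken path p, gp, g(gp) cannot backtrack much. A second application of hyperbolicity shows
  that a point of [p, gp] at distance r from its nearer end is moved by at most
  D - 2 min r ((D - L)/2 - \<delta>) + 4\<delta>. So midpoints of [x, gx] are moved by at most L + 6\<delta>, and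
  every p is within max 0 ((D - L)/2) of C_g. Finally, displacement along a geodesic exceeds the
  larger displacement of its endpoints by at most 4\<delta>, so points of [m1, m2] are moved by at most
  L + 10\<delta> and hence lie within 5\<delta> of C_g.
\<close>

lemma delta_hyperbolicD:
  assumes "delta_hyperbolic \<delta> TYPE('a::metric_space)"
  shows "min (gromov_product p q x) (gromov_product q r x) - \<delta> \<le> gromov_product (p::'a) r x"
  using assms unfolding delta_hyperbolic_def by blast

lemma delta_hyperbolic_nonneg:
  assumes "delta_hyperbolic \<delta> TYPE('a::metric_space)"
  shows "\<delta> \<ge> 0"
  using delta_hyperbolicD[OF assms, of "undefined::'a" undefined undefined undefined]
  by (simp add: gromov_product_def)

lemma isometry_dist: "isometry g \<Longrightarrow> dist (g x) (g y) = dist x y"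
  unfolding isometry_def by blast

lemma translation_length_greatest:
  "(\<And>x. c \<le> dist (g x) x) \<Longrightarrow> c \<le> translation_length g"
  unfolding translation_length_def by (rule cInf_greatest) auto

lemma translation_length_nonneg: "translation_length g \<ge> 0"
  by (rule translation_length_greatest) simp

lemma geodesic_path_dist_endpoints:
  assumes "geodesic_path \<gamma> a b" and "r \<in> {0..dist a b}"
  shows "dist (\<gamma> r) a = r" and "dist (\<gamma> r) b = dist a b - r"
proof -
  have ends: "\<gamma> 0 = a" "\<gamma> (dist a b) = b"
    and iso: "\<forall>s\<in>{0..dist a b}. \<forall>t\<in>{0..dist a b}. dist (\<gamma> s) (\<gamma> t) = \<bar>s - t\<bar>"
    using assms(1) unfolding geodesic_path_def by auto
  have "dist (\<gamma> r) (\<gamma> 0) = r" and "dist (\<gamma> r) (\<gamma> (dist a b)) = dist a b - r"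
    using iso assms(2) by auto
  then show "dist (\<gamma> r) a = r" and "dist (\<gamma> r) b = dist a b - r"
    by (simp_all add: ends)
qed

lemma geodesic_path_isometry_image:
  "isometry g \<Longrightarrow> geodesic_path \<gamma> a b \<Longrightarrow> geodesic_path (g \<circ> \<gamma>) (g a) (g b)"
  unfolding geodesic_path_def by (simp add: isometry_dist)

lemma geodesic_path_dist_le_max:
  assumes hyp: "delta_hyperbolic \<delta> TYPE('a::metric_space)"
    and \<gamma>: "geodesic_path \<gamma> a b" and t: "t \<in> {0..dist a b}"
  shows "dist (\<gamma> t) (w::'a) \<le> max (dist a w - t) (dist b w - (dist a b - t)) + 2 * \<delta>"
proof -
  have a: "dist (\<gamma> t) a = t" and b: "dist (\<gamma> t) b = dist a b - t"
    using geodesic_path_dist_endpoints[OF \<gamma> t] by auto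
  have "gromov_product a b (\<gamma> t) = 0"
    unfolding gromov_product_def using a b by (simp add: dist_commute)
  then have "min (gromov_product a w (\<gamma> t)) (gromov_product w b (\<gamma> t)) \<le> \<delta>"
    using delta_hyperbolicD[OF hyp, of a w "\<gamma> t" b] by linarith
  then show ?thesis
    using a b unfolding gromov_product_def by (auto simp: dist_commute min_def split: if_splits)
qed

lemma displacement_on_geodesic_le:
  assumes iso: "isometry g" and hyp: "delta_hyperbolic \<delta> TYPE('a::metric_space)"
    and \<sigma>: "geodesic_path \<sigma> a b" and t: "t \<in> {0..dist a b}"
  shows "dist (g (\<sigma> t)) (\<sigma> t) \<le> max (dist (g a) a) (dist (g b) (b::'a)) + 4 * \<delta>"
proof -
  define E where "E = max (dist (g a) a) (dist (g b) b)"
  define z where "z = \<sigma> t"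
  have g\<sigma>: "geodesic_path (g \<circ> \<sigma>) (g a) (g b)"
    by (rule geodesic_path_isometry_image[OF iso \<sigma>])
  have t': "t \<in> {0..dist (g a) (g b)}"
    using t by (simp add: isometry_dist[OF iso])
  have "dist (g z) a \<le> max (dist (g a) a - t) (dist (g b) a - (dist a b - t)) + 2 * \<delta>"
    using geodesic_path_dist_le_max[OF hyp g\<sigma> t', of a] by (simp add: z_def isometry_dist[OF iso])
  moreover have "dist (g b) a \<le> dist (g b) b + dist b a"
    by (rule dist_triangle)
  ultimately have za: "dist a (g z) \<le> E + t + 2 * \<delta>"
    using t unfolding E_def by (auto simp: dist_commute)
  have "dist (g z) b \<le> max (dist (g a) b - t) (dist (g b) b - (dist a b - t)) + 2 * \<delta>"
    using geodesic_path_dist_le_max[OF hyp g\<sigma> t', of b] by (simp add: z_def isometry_dist[OF iso])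
  moreover have "dist (g a) b \<le> dist (g a) a + dist a b"
    by (rule dist_triangle)
  ultimately have zb: "dist b (g z) \<le> E + (dist a b - t) + 2 * \<delta>"
    using t unfolding E_def by (auto simp: dist_commute)
  have "dist z (g z) \<le> max (dist a (g z) - t) (dist b (g z) - (dist a b - t)) + 2 * \<delta>"
    unfolding z_def by (rule geodesic_path_dist_le_max[OF hyp \<sigma> t])
  with za zb show ?thesis
    unfolding E_def z_def by (simp add: dist_commute)
qed

lemma gromov_product_iterate_ge:
  assumes iso: "isometry g" and hyp: "delta_hyperbolic \<delta> TYPE('a::metric_space)"
  shows "(dist (g p) p - translation_length g) / 2 - \<delta> \<le> gromov_product p (g (g p)) (g (p::'a))"
proof -
  let ?s = "gromov_product p (g (g p)) (g p)"
  have "dist (g p) p - 2 * ?s - 2 * \<delta> \<le> dist (g w) w" for w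
  proof -
    have "min (gromov_product p (g w) (g p)) (gromov_product (g w) (g (g p)) (g p)) - \<delta> \<le> ?s"
      by (rule delta_hyperbolicD[OF hyp])
    moreover have "dist (g p) p - dist (g w) w \<le> 2 * gromov_product p (g w) (g p)"
      using dist_triangle[of p "g w" w] isometry_dist[OF iso, of w p]
      unfolding gromov_product_def by (simp add: dist_commute)
    moreover have "dist (g p) p - dist (g w) w \<le> 2 * gromov_product (g w) (g (g p)) (g p)"
      using dist_triangle[of w "g p" "g w"] isometry_dist[OF iso, of w p]
        isometry_dist[OF iso, of "g p" p] isometry_dist[OF iso, of w "g p"]
      unfolding gromov_product_def by (simp add: dist_commute)
    ultimately show ?thesis
      by (auto simp: min_def split: if_splits)
  qed
  then have "dist (g p) p - 2 * ?s - 2 * \<delta> \<le> translation_length g"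
    by (rule translation_length_greatest)
  then show ?thesis
    by argo
qed

lemma displacement_on_segment_le:
  assumes iso: "isometry g" and hyp: "delta_hyperbolic \<delta> TYPE('a::metric_space)"
    and \<gamma>: "geodesic_path \<gamma> p (g p)" and r: "r \<in> {0..dist p (g (p::'a))}"
  shows "dist (g (\<gamma> r)) (\<gamma> r)
    \<le> dist p (g p) - 2 * min (min (dist p (g p) - r) r) (gromov_product p (g (g p)) (g p)) + 4 * \<delta>"
proof -
  define q where "q = \<gamma> r"
  define D where "D = dist p (g p)"
  have qp: "dist q p = r" and qgp: "dist q (g p) = D - r"
    using geodesic_path_dist_endpoints[OF \<gamma> r] unfolding q_def D_def by auto
  have "gromov_product q p (g p) = D - r"
    unfolding gromov_product_def using qp qgp by (simp add: D_def dist_commute)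
  then have "min (D - r) (gromov_product p (g (g p)) (g p)) - \<delta> \<le> gromov_product q (g (g p)) (g p)"
    using delta_hyperbolicD[OF hyp, of q p "g p" "g (g p)"] by simp
  moreover have "gromov_product (g (g p)) (g q) (g p) = r"
    using qp qgp unfolding gromov_product_def D_def
    by (simp add: isometry_dist[OF iso] dist_commute)
  then have "min (gromov_product q (g (g p)) (g p)) r - \<delta> \<le> gromov_product q (g q) (g p)"
    using delta_hyperbolicD[OF hyp, of q "g (g p)" "g p" "g q"] by simp
  moreover have "dist (g q) q = D - 2 * gromov_product q (g q) (g p)"
    using qp qgp unfolding gromov_product_def
    by (simp add: isometry_dist[OF iso] dist_commute field_simps)
  moreover have "\<delta> \<ge> 0"
    by (rule delta_hyperbolic_nonneg[OF hyp])
  ultimately show ?thesis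
    unfolding q_def D_def by (auto simp: min_def split: if_splits)
qed

lemma displacement_midpoint_le:
  assumes iso: "isometry g" and hyp: "delta_hyperbolic \<delta> TYPE('a::metric_space)"
    and \<gamma>: "geodesic_path \<gamma> p (g p)"
  shows "dist (g (\<gamma> (dist p (g p) / 2))) (\<gamma> (dist p (g (p::'a)) / 2)) \<le> translation_length g + 6 * \<delta>"
proof -
  define D where "D = dist p (g p)"
  define s where "s = gromov_product p (g (g p)) (g p)"
  have "(D - translation_length g) / 2 - \<delta> \<le> s"
    using gromov_product_iterate_ge[OF iso hyp, of p] by (simp add: s_def D_def dist_commute)
  moreover have "(D - translation_length g) / 2 - \<delta> \<le> D / 2"
    using translation_length_nonneg[of g] delta_hyperbolic_nonneg[OF hyp] by argo
  ultimately have "(D - translation_length g) / 2 - \<delta> \<le> min (min (D - D / 2) (D / 2)) s"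
    by simp
  moreover have "D / 2 \<in> {0..dist p (g p)}"
    by (simp add: D_def)
  note displacement_on_segment_le[OF iso hyp \<gamma> this]
  ultimately show ?thesis
    unfolding D_def s_def by argo
qed

lemma exists_near_min_set:
  assumes geod: "geodesic_space TYPE('a::metric_space)"
    and iso: "isometry g" and hyp: "delta_hyperbolic \<delta> TYPE('a)"
  obtains q where "q \<in> min_set \<delta> g" and "dist (p::'a) q \<le> max 0 ((dist (g p) p - translation_length g) / 2)"
proof (cases "dist (g p) p \<le> translation_length g + 8 * \<delta>")
  case True
  then show ?thesis
    by (intro that[of p]) (simp_all add: min_set_def)
next
  case False
  define D where "D = dist p (g p)"
  define r where "r = (D - translation_length g) / 2 - \<delta>"
  obtain \<gamma> where \<gamma>: "geodesic_path \<gamma> p (g p)"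
    using geod unfolding geodesic_space_def by blast
  have "0 \<le> r" and "r \<le> D / 2"
    using False translation_length_nonneg[of g] delta_hyperbolic_nonneg[OF hyp]
    unfolding r_def D_def by (simp_all add: dist_commute) argo+
  then have r_range: "r \<in> {0..dist p (g p)}"
    by (simp add: D_def)
  have "r \<le> gromov_product p (g (g p)) (g p)"
    using gromov_product_iterate_ge[OF iso hyp, of p] by (simp add: r_def D_def dist_commute)
  with \<open>r \<le> D / 2\<close> have "min (min (D - r) r) (gromov_product p (g (g p)) (g p)) = r"
    by simp
  then have "dist (g (\<gamma> r)) (\<gamma> r) \<le> D - 2 * r + 4 * \<delta>"
    using displacement_on_segment_le[OF iso hyp \<gamma> r_range] by (simp add: D_def)
  also have "\<dots> \<le> translation_length g + 8 * \<delta>"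
    using delta_hyperbolic_nonneg[OF hyp] unfolding r_def by argo
  finally have "\<gamma> r \<in> min_set \<delta> g"
    by (simp add: min_set_def)
  moreover have "dist p (\<gamma> r) \<le> max 0 ((dist (g p) p - translation_length g) / 2)"
    using geodesic_path_dist_endpoints(1)[OF \<gamma> r_range] delta_hyperbolic_nonneg[OF hyp]
    by (simp add: r_def D_def dist_commute)
  ultimately show ?thesis
    by (rule that)
qed

lemma mem_nbhdI: "q \<in> A \<Longrightarrow> dist p q \<le> a \<Longrightarrow> p \<in> nbhd A a"
  unfolding nbhd_def using infdist_le[of q A p] by auto

theorem lemma2p15:
  fixes \<delta> :: real and g :: "'a::metric_space \<Rightarrow> 'a" and x y :: 'a
    and \<gamma>1 \<gamma>2 \<sigma> :: "real \<Rightarrow> 'a"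
  assumes "geodesic_space TYPE('a)"
    and "\<delta> \<ge> 0"
    and "delta_hyperbolic \<delta> TYPE('a)"
    and "isometry g"
    and "geodesic_path \<gamma>1 x (g x)"
    and "geodesic_path \<gamma>2 y (g y)"
    and "m1 = \<gamma>1 (dist x (g x) / 2)"
    and "m2 = \<gamma>2 (dist y (g y) / 2)"
    and "geodesic_path \<sigma> m1 m2"
  shows "\<sigma> ` {0..dist m1 m2} \<subseteq> nbhd (min_set \<delta> g) (70 * \<delta>)"
proof
  fix z assume "z \<in> \<sigma> ` {0..dist m1 m2}"
  then obtain t where t: "t \<in> {0..dist m1 m2}" and z: "z = \<sigma> t"
    by blast
  let ?L = "translation_length g"
  have "dist (g m1) m1 \<le> ?L + 6 * \<delta>" and "dist (g m2) m2 \<le> ?L + 6 * \<delta>"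
    using displacement_midpoint_le[OF assms(4,3)] assms(5-8) by auto
  then have "dist (g z) z \<le> ?L + 10 * \<delta>"
    using displacement_on_geodesic_le[OF assms(4,3,9) t] z by simp
  moreover obtain q where "q \<in> min_set \<delta> g" and "dist z q \<le> max 0 ((dist (g z) z - ?L) / 2)"
    using exists_near_min_set[OF assms(1,4,3)] .
  ultimately show "z \<in> nbhd (min_set \<delta> g) (70 * \<delta>)"
    using \<open>\<delta> \<ge> 0\<close> by (intro mem_nbhdI) (auto simp: max_def split: if_splits)
qed

end
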